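(* Let $\nu$ and $\nu'$ be discrete distributions supported on a total of $\ell$ atoms in $[-1,1]$. If $|m_i(\nu)-m_i(\nu')|\le\delta$ for $i=1,\dots,\ell-1$, then \[W_1(\nu,\nu')\le O\big(\ell\delta^{\frac{1}{\ell-1}}\big).\]
   Context: $m_i(\pi)=\mathbb{E}_\pi X^i$; "supported on a total of $\ell$ atoms" means the union of the supports has $\ell$ points. $W_1$ is the 1-Wasserstein distance on $\mathbb{R}$; $O(\cdot)$ hides an absolute constant. *)

theory Defs
  imports "HOL-Probability.Probability"
begin

definition moment :: "nat \<Rightarrow> real pmf \<Rightarrow> real" where
  "moment i p = measure_pmf.expectation p (\<lambda>x. x ^ i)"

definition W1 :: "real pmf \<Rightarrow> real pmf \<Rightarrow> real" where
  "W1 p q = Inf {measure_pmf.expectation r (\<lambda>(x, y). \<bar>x - y\<bar>) | r.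
                   map_pmf fst r = p \<and> map_pmf snd r = q}"

end

theory Submission
  imports Defs "HOL-Computational_Algebra.Polynomial"
begin

text \<open>
  Order the union of the supports as \<open>x\<^sub>0 < \<dots> < x\<^bsub>l-1\<^esub>\<close> and let \<open>F\<^sub>k\<close> and \<open>F'\<^sub>k\<close> be the
  masses that the two distributions put on the first \<open>k\<close> atoms. The quantile coupling moves
  mass across the gap between \<open>x\<^sub>k\<close> and \<open>x\<^bsub>k+1\<^esub>\<close> only as much as it has to, so \<open>W\<^sub>1\<close> is at
  most the sum over \<open>k\<close> of \<open>\<bar>F\<^bsub>k+1\<^esub> - F'\<^bsub>k+1\<^esub>\<bar> (x\<^bsub>k+1\<^esub> - x\<^sub>k)\<close>.

  For fixed \<open>k\<close>, \<open>F\<^bsub>k+1\<^esub> - F'\<^bsub>k+1\<^esub>\<close> is the difference of the expectations of the polynomial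
  \<open>P\<close> of degree \<open>l - 1\<close> that is \<open>1\<close> on \<open>x\<^sub>0, \<dots>, x\<^sub>k\<close> and \<open>0\<close> on the other atoms, hence at most
  \<open>\<delta>\<close> times the sum of the absolute values of the non-constant coefficients of \<open>P\<close>. By Rolle's
  theorem \<open>P'\<close> vanishes between any two consecutive atoms except \<open>x\<^sub>k, x\<^bsub>k+1\<^esub>\<close>, so
  \<open>P' = \<alpha> \<Prod>\<^sub>j (X - y\<^sub>j)\<close> with \<open>\<bar>y\<^sub>j\<bar> \<le> 1\<close> and no \<open>y\<^sub>j\<close> in the gap, of length \<open>g\<close> say.
  Across the gap \<open>P\<close> decreases from \<open>1\<close> to \<open>0\<close>, and on its middle half
  \<open>\<bar>P'\<bar> \<ge> \<bar>\<alpha>\<bar> (g/4)\<^bsup>l-2\<^esup>\<close>; hence \<open>\<bar>\<alpha>\<bar> g\<^bsup>l-1\<^esup> \<le> 2 \<cdot> 4\<^bsup>l-2\<^esup>\<close> and the coefficients of \<open>P\<close>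
  sum to at most \<open>2 \<cdot> 8\<^bsup>l-2\<^esup> / g\<^bsup>l-1\<^esup>\<close>. Together with \<open>\<bar>F\<^bsub>k+1\<^esub> - F'\<^bsub>k+1\<^esub>\<bar> \<le> 1\<close> this bounds
  every term of the sum by \<open>8 \<delta>\<^bsup>1/(l-1)\<^esup>\<close>.
\<close>

section \<open>The quantile coupling\<close>

definition interval_overlap :: "real \<Rightarrow> real \<Rightarrow> real \<Rightarrow> real \<Rightarrow> real" where
  "interval_overlap a b c d = max 0 (min b d - max a c)"

lemma interval_overlap_commute: "interval_overlap a b c d = interval_overlap c d a b"
  unfolding interval_overlap_def by (simp add: min.commute max.commute)

lemma interval_overlap_eq_clamp_diff:
  assumes "a \<le> b" "c \<le> d"
  shows "interval_overlap a b c d = max a (min b d) - max a (min b c)"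
  using assms unfolding interval_overlap_def by (simp add: max_def min_def)

lemma interval_overlap_subinterval:
  assumes "c \<le> a" "a \<le> b" "b \<le> d"
  shows "interval_overlap a b c d = b - a"
  using assms unfolding interval_overlap_def by simp

lemma sum_interval_overlap:
  assumes "mono G" "a \<le> b" "m \<le> n"
  shows "(\<Sum>j\<in>{m..<n}. interval_overlap a b (G j) (G (Suc j))) = interval_overlap a b (G m) (G n)"
proof -
  let ?clamp = "\<lambda>t. max a (min b t)"
  have "(\<Sum>j\<in>{m..<n}. interval_overlap a b (G j) (G (Suc j)))
      = (\<Sum>j\<in>{m..<n}. ?clamp (G (Suc j)) - ?clamp (G j))"
    using assms by (intro sum.cong refl interval_overlap_eq_clamp_diff) (auto simp: monoD)
  also have "\<dots> = ?clamp (G n) - ?clamp (G m)"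
    using \<open>m \<le> n\<close> by (rule sum_Suc_diff')
  also have "\<dots> = interval_overlap a b (G m) (G n)"
    using assms by (simp add: interval_overlap_eq_clamp_diff monoD)
  finally show ?thesis .
qed

text \<open>
  For cumulative mass functions \<open>F\<close> and \<open>G\<close> on atoms \<open>0, 1, \<dots>\<close>, the quantile coupling sends
  from atom \<open>i\<close> to atom \<open>j\<close> the length of the overlap of the \<open>i\<close>-th step \<open>[F i, F (i + 1)]\<close> of
  \<open>F\<close> with the \<open>j\<close>-th step of \<open>G\<close>.
\<close>

definition quantile_coupling :: "(nat \<Rightarrow> real) \<Rightarrow> (nat \<Rightarrow> real) \<Rightarrow> nat \<Rightarrow> nat \<Rightarrow> real" where
  "quantile_coupling F G i j = interval_overlap (F i) (F (Suc i)) (G j) (G (Suc j))"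

lemma quantile_coupling_nonneg: "0 \<le> quantile_coupling F G i j"
  unfolding quantile_coupling_def interval_overlap_def by simp

lemma quantile_coupling_swap: "quantile_coupling F G i j = quantile_coupling G F j i"
  unfolding quantile_coupling_def by (rule interval_overlap_commute)

lemma sum_quantile_coupling_initial_columns:
  assumes "mono F" "mono G"
  shows "(\<Sum>j<b. quantile_coupling F G i j) = interval_overlap (F i) (F (Suc i)) (G 0) (G b)"
  using sum_interval_overlap[OF \<open>mono G\<close>, of "F i" "F (Suc i)" 0 b] \<open>mono F\<close>
  by (simp add: quantile_coupling_def atLeast0LessThan incseq_SucD)

lemma sum_quantile_coupling_initial_rows:
  assumes "mono F" "mono G"
  shows "(\<Sum>i<a. quantile_coupling F G i j) = interval_overlap (F 0) (F a) (G j) (G (Suc j))"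
proof -
  have "(\<Sum>i<a. quantile_coupling F G i j) = (\<Sum>i<a. quantile_coupling G F j i)"
    by (simp add: quantile_coupling_swap[of F G])
  also have "\<dots> = interval_overlap (G j) (G (Suc j)) (F 0) (F a)"
    by (rule sum_quantile_coupling_initial_columns[OF assms(2,1)])
  also have "\<dots> = interval_overlap (F 0) (F a) (G j) (G (Suc j))"
    by (rule interval_overlap_commute)
  finally show ?thesis .
qed

lemma sum_quantile_coupling_row:
  assumes "mono F" "mono G" "F 0 = G 0" "F n = G n" "i < n"
  shows "(\<Sum>j<n. quantile_coupling F G i j) = F (Suc i) - F i"
  unfolding sum_quantile_coupling_initial_columns[OF assms(1,2)]
  using assms monoD[OF \<open>mono F\<close>, of 0 i] monoD[OF \<open>mono F\<close>, of "Suc i" n]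
  by (intro interval_overlap_subinterval) (auto simp: incseq_SucD)

lemma sum_quantile_coupling_off_diagonal:
  assumes "mono F" "mono G" "F 0 = G 0" "F n = G n" "a \<le> n"
  shows "(\<Sum>i<a. \<Sum>j\<in>{a..<n}. quantile_coupling F G i j) = max 0 (F a - G a)"
proof -
  have "F 0 \<le> F a" "G a \<le> G n"
    using assms(1,2,5) by (simp_all add: monoD)
  have "(\<Sum>i<a. \<Sum>j\<in>{a..<n}. quantile_coupling F G i j)
      = (\<Sum>j\<in>{a..<n}. interval_overlap (F 0) (F a) (G j) (G (Suc j)))"
    by (subst sum.swap) (simp add: sum_quantile_coupling_initial_rows[OF assms(1,2)])
  also have "\<dots> = interval_overlap (F 0) (F a) (G a) (G n)"
    by (rule sum_interval_overlap[OF assms(2) \<open>F 0 \<le> F a\<close> assms(5)])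
  also have "\<dots> = max 0 (F a - G a)"
    using \<open>F 0 \<le> F a\<close> \<open>G a \<le> G n\<close> monoD[OF assms(1) \<open>a \<le> n\<close>] monoD[OF assms(2), of 0 a] assms(3,4)
    unfolding interval_overlap_def by simp
  finally show ?thesis .
qed

lemma sum_quantile_coupling_crossing:
  assumes "mono F" "mono G" "F 0 = G 0" "F n = G n" "k < n"
  shows "(\<Sum>i<n. \<Sum>j<n. if (i \<le> k) \<noteq> (j \<le> k) then quantile_coupling F G i j else 0)
    = \<bar>F (Suc k) - G (Suc k)\<bar>"
proof -
  have split: "(\<Sum>i<n. h i) = (\<Sum>i<Suc k. h i) + (\<Sum>i\<in>{Suc k..<n}. h i)" for h :: "nat \<Rightarrow> real"
    unfolding atLeast0LessThan[symmetric] using \<open>k < n\<close>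
    by (intro sum.atLeastLessThan_concat[symmetric]) auto
  have "(\<Sum>i\<in>{Suc k..<n}. \<Sum>j<Suc k. quantile_coupling F G i j)
      = (\<Sum>i<Suc k. \<Sum>j\<in>{Suc k..<n}. quantile_coupling G F i j)"
    by (subst sum.swap) (simp add: quantile_coupling_swap[of F G])
  also have "\<dots> = max 0 (G (Suc k) - F (Suc k))"
    using assms by (intro sum_quantile_coupling_off_diagonal) auto
  finally have "(\<Sum>i\<in>{Suc k..<n}. \<Sum>j<Suc k. quantile_coupling F G i j)
      = max 0 (G (Suc k) - F (Suc k))" .
  moreover have "(\<Sum>i<Suc k. \<Sum>j\<in>{Suc k..<n}. quantile_coupling F G i j)
      = max 0 (F (Suc k) - G (Suc k))"
    using assms by (intro sum_quantile_coupling_off_diagonal) auto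
  moreover have "(\<Sum>i<n. \<Sum>j<n. if (i \<le> k) \<noteq> (j \<le> k) then quantile_coupling F G i j else 0)
      = (\<Sum>i<Suc k. \<Sum>j\<in>{Suc k..<n}. quantile_coupling F G i j)
        + (\<Sum>i\<in>{Suc k..<n}. \<Sum>j<Suc k. quantile_coupling F G i j)"
    by (simp only: split)
      (simp add: less_Suc_eq_le Suc_le_eq del: sum.lessThan_Suc cong: sum.cong_simp)
  ultimately show ?thesis
    by simp
qed

lemma abs_diff_eq_sum_crossed_gaps:
  fixes x :: "nat \<Rightarrow> real"
  assumes "mono_on {..<n} x" "i < n" "j < n"
  shows "\<bar>x i - x j\<bar> = (\<Sum>k<n - 1. if (i \<le> k) \<noteq> (j \<le> k) then x (Suc k) - x k else 0)"
proof -
  have ordered: "(\<Sum>k<n - 1. if (i \<le> k) \<noteq> (j \<le> k) then x (Suc k) - x k else 0) = x j - x i"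
    if "i \<le> j" "j < n" for i j
  proof -
    have "(\<Sum>k<n - 1. if (i \<le> k) \<noteq> (j \<le> k) then x (Suc k) - x k else 0)
        = (\<Sum>k\<in>{i..<j}. x (Suc k) - x k)"
      using that by (intro sum.mono_neutral_cong_right) auto
    also have "\<dots> = x j - x i"
      using \<open>i \<le> j\<close> by (rule sum_Suc_diff')
    finally show ?thesis .
  qed
  show ?thesis
  proof (cases "i \<le> j")
    case True
    then show ?thesis
      using ordered[of i j] assms mono_onD[OF assms(1), of i j] by simp
  next
    case False
    then have "(\<Sum>k<n - 1. if (i \<le> k) \<noteq> (j \<le> k) then x (Suc k) - x k else 0) = x i - x j"
      using ordered[of j i] assms by (simp add: eq_commute[of "i \<le> _"])
    then show ?thesis
      using False assms mono_onD[OF assms(1), of j i] by simp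
  qed
qed

lemma quantile_coupling_cost:
  fixes x :: "nat \<Rightarrow> real"
  assumes "mono F" "mono G" "F 0 = G 0" "F n = G n" "mono_on {..<n} x"
  shows "(\<Sum>i<n. \<Sum>j<n. quantile_coupling F G i j * \<bar>x i - x j\<bar>)
    = (\<Sum>k<n - 1. \<bar>F (Suc k) - G (Suc k)\<bar> * (x (Suc k) - x k))"
proof -
  let ?w = "quantile_coupling F G"
  have "(\<Sum>i<n. \<Sum>j<n. ?w i j * \<bar>x i - x j\<bar>)
      = (\<Sum>i<n. \<Sum>j<n. \<Sum>k<n - 1. (if (i \<le> k) \<noteq> (j \<le> k) then ?w i j else 0) * (x (Suc k) - x k))"
    using assms(5)
    by (intro sum.cong refl)
      (auto simp: abs_diff_eq_sum_crossed_gaps sum_distrib_left intro!: sum.cong)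
  also have "\<dots> = (\<Sum>k<n - 1.
      (\<Sum>i<n. \<Sum>j<n. if (i \<le> k) \<noteq> (j \<le> k) then ?w i j else 0) * (x (Suc k) - x k))"
    by (simp only: sum.swap[where A = "{..<n}" and B = "{..<n - 1}"] sum_distrib_right)
  also have "\<dots> = (\<Sum>k<n - 1. \<bar>F (Suc k) - G (Suc k)\<bar> * (x (Suc k) - x k))"
    using assms(1-4) by (intro sum.cong refl) (subst sum_quantile_coupling_crossing, auto)
  finally show ?thesis .
qed

section \<open>Couplings from transport matrices\<close>

lemma exists_coupling_with_weights:
  fixes p q :: "real pmf" and w :: "real \<Rightarrow> real \<Rightarrow> real"
  assumes "finite A" "set_pmf p \<subseteq> A" "set_pmf q \<subseteq> A"
    and nonneg: "\<And>u v. u \<in> A \<Longrightarrow> v \<in> A \<Longrightarrow> 0 \<le> w u v"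
    and rows: "\<And>u. u \<in> A \<Longrightarrow> (\<Sum>v\<in>A. w u v) = pmf p u"
    and columns: "\<And>v. v \<in> A \<Longrightarrow> (\<Sum>u\<in>A. w u v) = pmf q v"
  obtains r where "map_pmf fst r = p" "map_pmf snd r = q"
    "\<And>u v. pmf r (u, v) = (if u \<in> A \<and> v \<in> A then w u v else 0)"
proof -
  define f where "f = (\<lambda>(u, v). if u \<in> A \<and> v \<in> A then w u v else 0)"
  define r where "r = embed_pmf f"
  have f_nonneg: "0 \<le> f z" for z
    using nonneg by (auto simp: f_def split: prod.split)
  have "(\<Sum>z\<in>A \<times> A. f z) = (\<Sum>u\<in>A. pmf p u)"
    by (simp add: sum.cartesian_product[symmetric] f_def rows)
  also have "\<dots> = 1"
    using assms(1,2) by (rule sum_pmf_eq_1)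
  finally have "(\<Sum>z\<in>A \<times> A. f z) = 1" .
  moreover have "(\<integral>\<^sup>+z. ennreal (f z) \<partial>count_space UNIV) = (\<Sum>z\<in>A \<times> A. ennreal (f z))"
    using \<open>finite A\<close> by (intro nn_integral_count_space') (auto simp: f_def split: prod.split)
  ultimately have "(\<integral>\<^sup>+z. ennreal (f z) \<partial>count_space UNIV) = 1"
    using f_nonneg by simp
  then have pmf_r: "pmf r z = f z" for z
    unfolding r_def by (rule pmf_embed_pmf[OF f_nonneg])
  have "map_pmf fst r = p"
  proof (rule pmf_eqI)
    fix u
    have "pmf (map_pmf fst r) u = measure r ({u} \<times> A)"
      unfolding pmf_map by (intro measure_prob_cong_0) (auto simp: pmf_r f_def split: prod.split)
    also have "\<dots> = pmf p u"
      using assms(1,2) by (cases "u \<in> A") (auto simp: measure_measure_pmf_finite pmf_r f_def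
          rows pmf_eq_0_set_pmf sum.cartesian_product[symmetric])
    finally show "pmf (map_pmf fst r) u = pmf p u" .
  qed
  moreover have "map_pmf snd r = q"
  proof (rule pmf_eqI)
    fix v
    have "pmf (map_pmf snd r) v = measure r (A \<times> {v})"
      unfolding pmf_map by (intro measure_prob_cong_0) (auto simp: pmf_r f_def split: prod.split)
    also have "\<dots> = pmf q v"
      using assms(1,3) by (cases "v \<in> A") (auto simp: measure_measure_pmf_finite pmf_r f_def
          columns pmf_eq_0_set_pmf sum.cartesian_product[symmetric])
    finally show "pmf (map_pmf snd r) v = pmf q v" .
  qed
  ultimately show ?thesis
    using that pmf_r by (simp add: f_def)
qed

lemma W1_le_coupling_weights:
  fixes p q :: "real pmf" and w :: "real \<Rightarrow> real \<Rightarrow> real"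
  assumes "finite A" "set_pmf p \<subseteq> A" "set_pmf q \<subseteq> A"
    and "\<And>u v. u \<in> A \<Longrightarrow> v \<in> A \<Longrightarrow> 0 \<le> w u v"
    and "\<And>u. u \<in> A \<Longrightarrow> (\<Sum>v\<in>A. w u v) = pmf p u"
    and "\<And>v. v \<in> A \<Longrightarrow> (\<Sum>u\<in>A. w u v) = pmf q v"
  shows "W1 p q \<le> (\<Sum>u\<in>A. \<Sum>v\<in>A. w u v * \<bar>u - v\<bar>)"
proof -
  obtain r where marginals: "map_pmf fst r = p" "map_pmf snd r = q"
    and pmf_r: "\<And>u v. pmf r (u, v) = (if u \<in> A \<and> v \<in> A then w u v else 0)"
    using exists_coupling_with_weights[OF assms] by blast
  have "W1 p q \<le> measure_pmf.expectation r (\<lambda>(u, v). \<bar>u - v\<bar>)"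
    unfolding W1_def using marginals
    by (intro cInf_lower bdd_belowI[of _ 0]) (auto intro!: integral_nonneg_AE)
  also have "\<dots> = (\<Sum>z\<in>A \<times> A. (\<lambda>(u, v). \<bar>u - v\<bar>) z * pmf r z)"
    using \<open>finite A\<close> pmf_r
    by (intro integral_measure_pmf_real) (auto simp: set_pmf_iff split: if_splits)
  also have "\<dots> = (\<Sum>u\<in>A. \<Sum>v\<in>A. w u v * \<bar>u - v\<bar>)"
    by (subst sum.cartesian_product) (auto simp: pmf_r intro!: sum.cong)
  finally show ?thesis .
qed

lemma sum_set_conv_sum_nth:
  "distinct xs \<Longrightarrow> (\<Sum>u\<in>set xs. g u) = (\<Sum>i<length xs. g (xs ! i))"
  by (simp add: sum.distinct_set_conv_list sum.list_conv_set_nth atLeast0LessThan)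

definition prefix_mass :: "real pmf \<Rightarrow> real list \<Rightarrow> nat \<Rightarrow> real" where
  "prefix_mass p xs k = (\<Sum>j<k. pmf p (xs ! j))"

lemma mono_prefix_mass: "mono (prefix_mass p xs)"
  unfolding prefix_mass_def by (intro monoI sum_mono2) auto

lemma prefix_mass_length:
  assumes "distinct xs" "set_pmf p \<subseteq> set xs"
  shows "prefix_mass p xs (length xs) = 1"
  using sum_pmf_eq_1[OF _ assms(2)] assms(1) by (simp add: prefix_mass_def sum_set_conv_sum_nth)

lemma abs_diff_prefix_mass_le_1:
  assumes "distinct xs" "set_pmf p \<subseteq> set xs" "set_pmf q \<subseteq> set xs" "k \<le> length xs"
  shows "\<bar>prefix_mass p xs k - prefix_mass q xs k\<bar> \<le> 1"
proof -
  have bounds: "prefix_mass r xs k \<in> {0..1}" if "set_pmf r \<subseteq> set xs" for r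
    using monoD[OF mono_prefix_mass[of r xs] \<open>k \<le> length xs\<close>] prefix_mass_length[OF assms(1) that]
    by (simp add: prefix_mass_def sum_nonneg)
  show ?thesis
    using bounds[OF assms(2)] bounds[OF assms(3)] by (simp add: abs_le_iff)
qed

lemma W1_le_sum_prefix_mass_gaps:
  assumes "sorted_wrt (<) xs" "set_pmf p \<subseteq> set xs" "set_pmf q \<subseteq> set xs"
  shows "W1 p q \<le> (\<Sum>k<length xs - 1.
    \<bar>prefix_mass p xs (Suc k) - prefix_mass q xs (Suc k)\<bar> * (xs ! Suc k - xs ! k))"
proof -
  let ?n = "length xs" and ?F = "prefix_mass p xs" and ?G = "prefix_mass q xs"
  define index where "index = the_inv_into {..<?n} (\<lambda>i. xs ! i)"
  define w where "w u v = quantile_coupling ?F ?G (index u) (index v)" for u v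
  have "distinct xs"
    using assms(1) by (simp add: strict_sorted_iff)
  note sum_set_nth = sum_set_conv_sum_nth[OF \<open>distinct xs\<close>]
  have index_nth: "index (xs ! i) = i" if "i < ?n" for i
    unfolding index_def using that \<open>distinct xs\<close>
    by (intro the_inv_into_f_f) (auto simp: inj_on_nth)
  have cdf: "mono ?F" "mono ?G" "?F 0 = ?G 0" "?F ?n = ?G ?n"
    using \<open>distinct xs\<close> assms(2,3)
    by (simp_all add: mono_prefix_mass prefix_mass_length) (simp add: prefix_mass_def)
  have "mono_on {..<?n} (\<lambda>i. xs ! i)"
    using assms(1) by (intro mono_onI) (auto simp: sorted_wrt_iff_nth_less le_less)
  have "W1 p q \<le> (\<Sum>u\<in>set xs. \<Sum>v\<in>set xs. w u v * \<bar>u - v\<bar>)"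
  proof (rule W1_le_coupling_weights[OF _ assms(2,3)])
    show "0 \<le> w u v" for u v
      unfolding w_def by (rule quantile_coupling_nonneg)
    show "(\<Sum>v\<in>set xs. w u v) = pmf p u" if "u \<in> set xs" for u
      using that cdf by (auto simp: in_set_conv_nth sum_set_nth w_def index_nth
          sum_quantile_coupling_row prefix_mass_def)
    show "(\<Sum>u\<in>set xs. w u v) = pmf q v" if "v \<in> set xs" for v
      using that cdf by (auto simp: in_set_conv_nth sum_set_nth w_def index_nth
          quantile_coupling_swap[of ?F] sum_quantile_coupling_row prefix_mass_def)
  qed simp
  also have "\<dots> = (\<Sum>i<?n. \<Sum>j<?n. quantile_coupling ?F ?G i j * \<bar>xs ! i - xs ! j\<bar>)"
    by (simp add: sum_set_nth w_def index_nth)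
  also have "\<dots> = (\<Sum>k<?n - 1. \<bar>?F (Suc k) - ?G (Suc k)\<bar> * (xs ! Suc k - xs ! k))"
    using cdf \<open>mono_on {..<?n} (\<lambda>i. xs ! i)\<close> by (rule quantile_coupling_cost)
  finally show ?thesis .
qed

section \<open>Step polynomials\<close>

lemma sum_abs_coeff_prod_linear_le:
  fixes y :: "'k \<Rightarrow> real"
  assumes "finite K" "\<And>k. k \<in> K \<Longrightarrow> \<bar>y k\<bar> \<le> 1"
  shows "(\<Sum>n<N. \<bar>coeff (\<Prod>k\<in>K. [:- y k, 1:]) n\<bar>) \<le> 2 ^ card K"
  using assms
proof (induction K arbitrary: N rule: finite_induct)
  case empty
  have "(\<Sum>n<N. \<bar>coeff (1 :: real poly) n\<bar>) = (if N = 0 then 0 else 1)"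
    by (induction N) (auto simp: coeff_1)
  then show ?case by simp
next
  case (insert k K)
  define R where "R = (\<Prod>k\<in>K. [:- y k, 1:])"
  have IH: "(\<Sum>n<N. \<bar>coeff R n\<bar>) \<le> 2 ^ card K" for N
    using insert unfolding R_def by auto
  have insert_eq: "(\<Prod>k\<in>insert k K. [:- y k, 1:]) = smult (- y k) R + pCons 0 R"
    using insert unfolding R_def by (simp add: mult_pCons_left)
  have "\<bar>coeff (\<Prod>k\<in>insert k K. [:- y k, 1:]) n\<bar> \<le> \<bar>coeff R n\<bar> + \<bar>coeff (pCons 0 R) n\<bar>" for n
  proof -
    have "\<bar>- y k * coeff R n\<bar> \<le> \<bar>coeff R n\<bar>"
      using insert.prems[of k] by (simp add: abs_mult mult_left_le_one_le)
    then show ?thesis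
      using abs_triangle_ineq[of "- y k * coeff R n" "coeff (pCons 0 R) n"]
      unfolding insert_eq coeff_add coeff_smult by linarith
  qed
  then have "(\<Sum>n<N. \<bar>coeff (\<Prod>k\<in>insert k K. [:- y k, 1:]) n\<bar>)
      \<le> (\<Sum>n<N. \<bar>coeff R n\<bar>) + (\<Sum>n<N. \<bar>coeff (pCons 0 R) n\<bar>)"
    unfolding sum.distrib[symmetric] by (rule sum_mono)
  also have "(\<Sum>n<N. \<bar>coeff (pCons 0 R) n\<bar>) \<le> (\<Sum>n<N. \<bar>coeff R n\<bar>)"
  proof (cases N)
    case (Suc N')
    have "(\<Sum>n<N. \<bar>coeff (pCons 0 R) n\<bar>) = (\<Sum>n<N'. \<bar>coeff R n\<bar>)"
      unfolding Suc by (subst sum.lessThan_Suc_shift) simp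
    also have "\<dots> \<le> (\<Sum>n<N. \<bar>coeff R n\<bar>)"
      unfolding Suc by simp
    finally show ?thesis .
  qed simp
  finally show ?case
    using IH[of N] insert by simp
qed

lemma exists_interpolating_poly:
  fixes x v :: "'i \<Rightarrow> 'a :: field"
  assumes "finite I" "inj_on x I"
  shows "\<exists>P. degree P \<le> card I - 1 \<and> (\<forall>i\<in>I. poly P (x i) = v i)"
proof -
  define L where "L j = (\<Prod>i\<in>I - {j}. smult (1 / (x j - x i)) [:- x i, 1:])" for j
  have degree_L: "degree (L j) \<le> card I - 1" if "j \<in> I" for j
  proof -
    have "degree (L j) \<le> sum (degree \<circ> (\<lambda>i. smult (1 / (x j - x i)) [:- x i, 1:])) (I - {j})"
      unfolding L_def using \<open>finite I\<close> by (intro degree_prod_sum_le) simp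
    also have "\<dots> \<le> (\<Sum>i\<in>I - {j}. 1)"
      unfolding o_def by (intro sum_mono order.trans[OF degree_smult_le]) simp
    finally show ?thesis
      using \<open>finite I\<close> that by (simp add: card_Diff_singleton)
  qed
  have poly_L: "poly (L j) (x m) = (if j = m then 1 else 0)" if "j \<in> I" "m \<in> I" for j m
  proof (cases "j = m")
    case True
    have "x j \<noteq> x i" if "i \<in> I - {j}" for i
      using \<open>inj_on x I\<close> \<open>j \<in> I\<close> that by (auto dest: inj_onD)
    then show ?thesis
      using True by (auto simp: L_def poly_prod diff_divide_distrib[symmetric] intro!: prod.neutral)
  next
    case False
    then show ?thesis
      using that \<open>finite I\<close> by (auto simp: L_def poly_prod intro!: prod_zero bexI[of _ m])
  qed
  define P where "P = (\<Sum>j\<in>I. smult (v j) (L j))"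
  have "degree P \<le> card I - 1"
    unfolding P_def using degree_L \<open>finite I\<close>
    by (intro degree_sum_le) (auto intro: order.trans[OF degree_smult_le])
  moreover have "poly P (x m) = v m" if "m \<in> I" for m
    using that \<open>finite I\<close> by (simp add: P_def poly_sum poly_L if_distrib cong: if_cong)
  ultimately show ?thesis
    by blast
qed

lemma poly_eq_smult_prod_linear_roots:
  fixes D :: "'a :: idom poly"
  assumes "finite K" "inj_on y K" "degree D \<le> card K" "\<And>k. k \<in> K \<Longrightarrow> poly D (y k) = 0"
  shows "D = smult (coeff D (card K)) (\<Prod>k\<in>K. [:- y k, 1:])"
proof (rule ccontr)
  define R where "R = (\<Prod>k\<in>K. [:- y k, 1:])"
  define Q where "Q = D - smult (coeff D (card K)) R"
  assume "\<not> ?thesis"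
  then have "Q \<noteq> 0"
    unfolding Q_def R_def by simp
  have "degree R = card K" "coeff R (card K) = 1"
    using lead_coeff_prod[of "\<lambda>k. [:- y k, 1:]" K]
    by (simp_all add: R_def degree_prod_eq_sum_degree)
  then have "degree Q \<le> card K" "coeff Q (card K) = 0"
    using assms(3) by (auto simp: Q_def intro: degree_diff_le order.trans[OF degree_smult_le])
  with \<open>Q \<noteq> 0\<close> have "degree Q < card K"
    by (metis leading_coeff_0_iff le_neq_implies_less)
  have "y ` K \<subseteq> {t. poly Q t = 0}"
    using assms(1,4) by (auto simp: Q_def R_def poly_prod)
  then have "card (y ` K) \<le> card {t. poly Q t = 0}"
    by (rule card_mono[OF poly_roots_finite[OF \<open>Q \<noteq> 0\<close>]])
  then have "card K \<le> card {t. poly Q t = 0}"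
    by (simp add: card_image[OF assms(2)])
  also have "\<dots> \<le> degree Q"
    using \<open>Q \<noteq> 0\<close> by (rule card_poly_roots_bound)
  finally show False
    using \<open>degree Q < card K\<close> by simp
qed

lemma sum_abs_coeff_le_sum_abs_coeff_pderiv:
  fixes P :: "real poly"
  shows "(\<Sum>i\<in>{1..n}. \<bar>coeff P i\<bar>) \<le> (\<Sum>i<n. \<bar>coeff (pderiv P) i\<bar>)"
proof -
  have "(\<Sum>i\<in>{1..n}. \<bar>coeff P i\<bar>) = (\<Sum>i<n. \<bar>coeff P (Suc i)\<bar>)"
    by (subst image_Suc_lessThan[symmetric]) (simp add: sum.reindex)
  also have "\<dots> \<le> (\<Sum>i<n. \<bar>coeff (pderiv P) i\<bar>)"
    by (intro sum_mono) (simp add: coeff_pderiv abs_mult mult_le_cancel_right1)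
  finally show ?thesis .
qed

lemma poly_prod_linear_same_sign:
  fixes y :: "'k \<Rightarrow> real"
  assumes "finite K" "\<And>k. k \<in> K \<Longrightarrow> y k < a \<or> b < y k" "t \<in> {a..b}" "s \<in> {a..b}"
  shows "0 < poly (\<Prod>k\<in>K. [:- y k, 1:]) t * poly (\<Prod>k\<in>K. [:- y k, 1:]) s"
proof -
  have "0 < (\<Prod>k\<in>K. (t - y k) * (s - y k))"
  proof (rule prod_pos)
    fix k assume "k \<in> K"
    then show "0 < (t - y k) * (s - y k)"
      using assms(2)[of k] assms(3,4) by (auto intro: mult_pos_pos mult_neg_neg)
  qed
  then show ?thesis
    by (simp add: poly_prod prod.distrib)
qed

lemma abs_poly_prod_linear_ge:
  fixes y :: "'k \<Rightarrow> real"
  assumes "0 \<le> d" "\<And>k. k \<in> K \<Longrightarrow> d \<le> \<bar>t - y k\<bar>"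
  shows "d ^ card K \<le> \<bar>poly (\<Prod>k\<in>K. [:- y k, 1:]) t\<bar>"
proof (cases "finite K")
  case True
  have "d ^ card K = (\<Prod>k\<in>K. d)"
    by simp
  also have "\<dots> \<le> (\<Prod>k\<in>K. \<bar>t - y k\<bar>)"
    using assms by (intro prod_mono) auto
  finally show ?thesis
    by (simp add: poly_prod abs_prod)
qed simp

lemma pderiv_nonpos_of_roots_outside:
  fixes P :: "real poly" and y :: "'k \<Rightarrow> real"
  assumes "a < b" "poly P b < poly P a" "finite K"
    and roots_outside: "\<And>k. k \<in> K \<Longrightarrow> y k < a \<or> b < y k"
    and pderiv_P: "pderiv P = smult \<alpha> (\<Prod>k\<in>K. [:- y k, 1:])"
    and "t \<in> {a..b}"
  shows "poly (pderiv P) t \<le> 0"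
proof -
  obtain \<xi> where \<xi>: "a < \<xi>" "\<xi> < b" "poly P b - poly P a = (b - a) * poly (pderiv P) \<xi>"
    using poly_MVT[OF \<open>a < b\<close>] by blast
  have "poly (pderiv P) t * poly (pderiv P) \<xi>
      = \<alpha>\<^sup>2 * (poly (\<Prod>k\<in>K. [:- y k, 1:]) t * poly (\<Prod>k\<in>K. [:- y k, 1:]) \<xi>)"
    by (simp add: pderiv_P power2_eq_square algebra_simps)
  moreover have "0 < poly (\<Prod>k\<in>K. [:- y k, 1:]) t * poly (\<Prod>k\<in>K. [:- y k, 1:]) \<xi>"
    using \<xi>(1,2) \<open>t \<in> {a..b}\<close>
    by (intro poly_prod_linear_same_sign[OF \<open>finite K\<close> roots_outside]) auto
  ultimately have "0 \<le> poly (pderiv P) t * poly (pderiv P) \<xi>"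
    by simp
  moreover have "poly (pderiv P) \<xi> < 0"
    using \<xi>(3) assms(1,2) mult_nonneg_nonneg[of "b - a" "poly (pderiv P) \<xi>"] by linarith
  ultimately show ?thesis
    by (simp add: zero_le_mult_iff)
qed

lemma abs_pderiv_factor_bound:
  fixes P :: "real poly" and y :: "'k \<Rightarrow> real"
  assumes "a < b" "poly P a = 1" "poly P b = 0" "finite K"
    and roots_outside: "\<And>k. k \<in> K \<Longrightarrow> y k < a \<or> b < y k"
    and pderiv_P: "pderiv P = smult \<alpha> (\<Prod>k\<in>K. [:- y k, 1:])"
  shows "\<bar>\<alpha>\<bar> * (b - a) ^ Suc (card K) \<le> 2 * 4 ^ card K"
proof -
  define g where "g = b - a"
  \<comment> \<open>\<open>P\<close> drops by at most \<open>1\<close> over the middle half of the gap, where \<open>\<bar>P'\<bar> \<ge> \<bar>\<alpha>\<bar> (g / 4)\<^bsup>card K\<^esup>\<close>.\<close>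
  define a' b' where "a' = a + g / 4" and "b' = b - g / 4"
  have "g > 0" "a < a'" "a' < b'" "b' < b"
    using \<open>a < b\<close> by (simp_all add: a'_def b'_def g_def field_simps)
  have decreasing: "poly (pderiv P) t \<le> 0" if "t \<in> {a..b}" for t
    using assms that by (intro pderiv_nonpos_of_roots_outside) auto
  have nonincreasing: "poly P t \<le> poly P s" if "a \<le> s" "s \<le> t" "t \<le> b" for s t
  proof (rule DERIV_nonpos_imp_nonincreasing[OF \<open>s \<le> t\<close>])
    fix x assume "s \<le> x" "x \<le> t"
    then show "\<exists>y. DERIV (poly P) x :> y \<and> y \<le> 0"
      using decreasing[of x] that by (intro exI[of _ "poly (pderiv P) x"]) auto
  qed
  obtain \<eta> where \<eta>: "a' < \<eta>" "\<eta> < b'" "poly P b' - poly P a' = (b' - a') * poly (pderiv P) \<eta>"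
    using poly_MVT[OF \<open>a' < b'\<close>] by blast
  have "(g / 4) ^ card K \<le> \<bar>poly (\<Prod>k\<in>K. [:- y k, 1:]) \<eta>\<bar>"
  proof (rule abs_poly_prod_linear_ge)
    show "g / 4 \<le> \<bar>\<eta> - y k\<bar>" if "k \<in> K" for k
      using roots_outside[OF that] \<eta>(1,2) unfolding a'_def b'_def by (auto simp: abs_if)
  qed (use \<open>g > 0\<close> in simp)
  then have "\<bar>\<alpha>\<bar> * (g / 4) ^ card K \<le> - poly (pderiv P) \<eta>"
    using decreasing[of \<eta>] \<eta>(1,2) \<open>a < a'\<close> \<open>b' < b\<close>
    by (simp add: pderiv_P abs_mult mult_left_mono flip: abs_of_nonpos)
  then have "(g / 2) * (\<bar>\<alpha>\<bar> * (g / 4) ^ card K) \<le> (g / 2) * - poly (pderiv P) \<eta>"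
    using \<open>g > 0\<close> by (intro mult_left_mono) auto
  also have "\<dots> = poly P a' - poly P b'"
    using \<eta>(3) by (simp add: a'_def b'_def g_def field_simps)
  also have "\<dots> \<le> poly P a - poly P b"
    using nonincreasing[of a a'] nonincreasing[of b' b] \<open>a < a'\<close> \<open>a' < b'\<close> \<open>b' < b\<close> by simp
  finally show ?thesis
    using assms(2,3) by (simp add: g_def field_simps)
qed

lemma exists_pderiv_roots_between:
  fixes x :: "nat \<Rightarrow> real" and P :: "real poly"
  assumes "\<And>j. j \<in> K \<Longrightarrow> x j < x (Suc j) \<and> poly P (x j) = poly P (x (Suc j))"
  obtains y where "\<And>j. j \<in> K \<Longrightarrow> x j < y j \<and> y j < x (Suc j) \<and> poly (pderiv P) (y j) = 0"
proof -
  have "\<forall>j\<in>K. \<exists>z. x j < z \<and> z < x (Suc j) \<and> poly (pderiv P) z = 0"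
    using assms poly_MVT[of "x _" "x (Suc _)" P] by fastforce
  then show ?thesis
    using that by metis
qed

lemma sum_abs_coeff_le_of_pderiv_eq:
  fixes P :: "real poly" and y :: "'k \<Rightarrow> real"
  assumes "pderiv P = smult \<alpha> (\<Prod>k\<in>K. [:- y k, 1:])" "finite K" "\<And>k. k \<in> K \<Longrightarrow> \<bar>y k\<bar> \<le> 1"
  shows "(\<Sum>i\<in>{1..Suc (card K)}. \<bar>coeff P i\<bar>) \<le> \<bar>\<alpha>\<bar> * 2 ^ card K"
proof -
  have "(\<Sum>i\<in>{1..Suc (card K)}. \<bar>coeff P i\<bar>) \<le> (\<Sum>i<Suc (card K). \<bar>coeff (pderiv P) i\<bar>)"
    by (rule sum_abs_coeff_le_sum_abs_coeff_pderiv)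
  also have "\<dots> = \<bar>\<alpha>\<bar> * (\<Sum>i<Suc (card K). \<bar>coeff (\<Prod>k\<in>K. [:- y k, 1:]) i\<bar>)"
    by (simp add: assms(1) abs_mult sum_distrib_left del: sum.lessThan_Suc)
  also have "\<dots> \<le> \<bar>\<alpha>\<bar> * 2 ^ card K"
    using sum_abs_coeff_prod_linear_le[of K y "Suc (card K)", OF assms(2,3)]
    by (intro mult_left_mono) simp_all
  finally show ?thesis .
qed

lemma interlaced_points:
  fixes x y :: "nat \<Rightarrow> real"
  assumes x_mono: "strict_mono_on {..Suc m} x" and x_range: "x ` {..Suc m} \<subseteq> {-1..1}"
    and "k \<le> m" and y: "\<And>j. j \<in> {..m} - {k} \<Longrightarrow> x j < y j \<and> y j < x (Suc j)"
  shows "inj_on y ({..m} - {k})"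
    and "\<And>j. j \<in> {..m} - {k} \<Longrightarrow> y j < x k \<or> x (Suc k) < y j"
    and "\<And>j. j \<in> {..m} - {k} \<Longrightarrow> \<bar>y j\<bar> \<le> 1"
proof -
  have x_le: "x i \<le> x j" if "i \<le> j" "j \<le> Suc m" for i j
    using that by (auto intro: strict_mono_on_leD[OF x_mono])
  have y_less: "y i < y j" if "i \<in> {..m} - {k}" "j \<in> {..m} - {k}" "i < j" for i j
    using y[OF that(1)] y[OF that(2)] x_le[of "Suc i" j] that by fastforce
  show "inj_on y ({..m} - {k})"
  proof (rule inj_onI)
    fix i j assume "i \<in> {..m} - {k}" "j \<in> {..m} - {k}" "y i = y j"
    then show "i = j"
      using y_less[of i j] y_less[of j i] by (cases i j rule: linorder_cases) auto
  qed
  show "y j < x k \<or> x (Suc k) < y j" if "j \<in> {..m} - {k}" for j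
  proof (cases "j < k")
    case True
    then show ?thesis
      using y[OF that] x_le[of "Suc j" k] \<open>k \<le> m\<close> by fastforce
  next
    case False
    then show ?thesis
      using y[OF that] x_le[of "Suc k" j] that by fastforce
  qed
  show "\<bar>y j\<bar> \<le> 1" if "j \<in> {..m} - {k}" for j
  proof -
    have "x j \<in> {-1..1}" "x (Suc j) \<in> {-1..1}"
      using that x_range by (auto simp: image_subset_iff)
    then show ?thesis
      using y[OF that] by auto
  qed
qed

lemma exists_step_poly:
  fixes x :: "nat \<Rightarrow> real"
  assumes x_mono: "strict_mono_on {..Suc m} x" and x_range: "x ` {..Suc m} \<subseteq> {-1..1}"
    and "k \<le> m"
  shows "\<exists>P. degree P \<le> Suc m \<and> (\<forall>j\<le>Suc m. poly P (x j) = (if j \<le> k then 1 else 0))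
    \<and> (\<Sum>i\<in>{1..Suc m}. \<bar>coeff P i\<bar>) * (x (Suc k) - x k) ^ Suc m \<le> 2 * 8 ^ m"
proof -
  have x_less: "x i < x j" if "i < j" "j \<le> Suc m" for i j
    using that by (auto intro: strict_mono_onD[OF x_mono])
  obtain P where "degree P \<le> Suc m"
    and P_step: "\<And>j. j \<le> Suc m \<Longrightarrow> poly P (x j) = (if j \<le> k then 1 else 0)"
    using exists_interpolating_poly[OF _ strict_mono_on_imp_inj_on[OF x_mono],
        of "\<lambda>j. if j \<le> k then 1 else 0"] by auto
  define K where "K = {..m} - {k}"
  have "finite K" "card K = m"
    using \<open>k \<le> m\<close> by (simp_all add: K_def card_Diff_singleton)
  obtain y where y: "\<And>j. j \<in> K \<Longrightarrow> x j < y j \<and> y j < x (Suc j) \<and> poly (pderiv P) (y j) = 0"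
    using exists_pderiv_roots_between[of K x P] x_less P_step by (force simp: K_def)
  note roots = interlaced_points[OF x_mono x_range \<open>k \<le> m\<close>, of y, folded K_def]
  define \<alpha> where "\<alpha> = coeff (pderiv P) m"
  have "degree (pderiv P) \<le> card K"
    using \<open>degree P \<le> Suc m\<close> \<open>card K = m\<close> by (simp add: degree_pderiv)
  then have pderiv_P: "pderiv P = smult \<alpha> (\<Prod>j\<in>K. [:- y j, 1:])"
    unfolding \<alpha>_def \<open>card K = m\<close>[symmetric]
    using \<open>finite K\<close> roots(1) y by (intro poly_eq_smult_prod_linear_roots) auto
  have "\<bar>\<alpha>\<bar> * (x (Suc k) - x k) ^ Suc m \<le> 2 * 4 ^ m"
    using abs_pderiv_factor_bound[OF _ _ _ \<open>finite K\<close> roots(2) pderiv_P] y x_less[of k "Suc k"]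
      P_step[of k] P_step[of "Suc k"] \<open>k \<le> m\<close> \<open>card K = m\<close> by simp
  moreover have "(\<Sum>i\<in>{1..Suc m}. \<bar>coeff P i\<bar>) \<le> \<bar>\<alpha>\<bar> * 2 ^ m"
    using sum_abs_coeff_le_of_pderiv_eq[OF pderiv_P \<open>finite K\<close> roots(3)] y \<open>card K = m\<close> by simp
  ultimately have "(\<Sum>i\<in>{1..Suc m}. \<bar>coeff P i\<bar>) * (x (Suc k) - x k) ^ Suc m
      \<le> 2 ^ m * (\<bar>\<alpha>\<bar> * (x (Suc k) - x k) ^ Suc m)"
    using x_less[of k "Suc k"] \<open>k \<le> m\<close> by (simp add: mult_right_mono mult.commute mult.left_commute)
  also have "\<dots> \<le> 2 ^ m * (2 * 4 ^ m)"
    using \<open>\<bar>\<alpha>\<bar> * (x (Suc k) - x k) ^ Suc m \<le> 2 * 4 ^ m\<close> by simp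
  also have "\<dots> = 2 * 8 ^ m"
    by (simp flip: power_mult_distrib)
  finally show ?thesis
    using \<open>degree P \<le> Suc m\<close> P_step by blast
qed

section \<open>Moments and the main estimate\<close>

lemma expectation_poly_eq_sum_moments:
  fixes P :: "real poly"
  assumes "finite (set_pmf p)" "degree P \<le> n"
  shows "measure_pmf.expectation p (poly P) = (\<Sum>i\<le>n. coeff P i * moment i p)"
proof -
  have "poly P z = (\<Sum>i\<le>n. coeff P i * z ^ i)" for z
    using arg_cong[OF poly_as_sum_of_monoms'[OF assms(2)], of "\<lambda>Q. poly Q z"]
    by (simp add: poly_sum poly_monom)
  then have "poly P = (\<lambda>z. \<Sum>i\<le>n. coeff P i * z ^ i)"
    by blast
  then show ?thesis
    using assms(1) by (simp add: moment_def integrable_measure_pmf_finite)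
qed

lemma abs_expectation_poly_diff_le:
  fixes P :: "real poly"
  assumes "finite (set_pmf p)" "finite (set_pmf q)" "degree P \<le> n"
    and moments: "\<forall>i\<in>{1..n}. \<bar>moment i p - moment i q\<bar> \<le> \<delta>"
  shows "\<bar>measure_pmf.expectation p (poly P) - measure_pmf.expectation q (poly P)\<bar>
    \<le> \<delta> * (\<Sum>i\<in>{1..n}. \<bar>coeff P i\<bar>)"
proof -
  have "{..n} = insert 0 {1..n}"
    by auto
  then have "measure_pmf.expectation p (poly P) - measure_pmf.expectation q (poly P)
      = (\<Sum>i\<in>{1..n}. coeff P i * (moment i p - moment i q))"
    using assms(1-3) by (simp add: expectation_poly_eq_sum_moments moment_def sum_subtractf
        right_diff_distrib)
  also have "\<bar>\<dots>\<bar> \<le> (\<Sum>i\<in>{1..n}. \<bar>coeff P i\<bar> * \<delta>)"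
    using moments by (intro order.trans[OF sum_abs] sum_mono) (simp add: abs_mult mult_left_mono)
  finally show ?thesis
    by (simp add: sum_distrib_left mult.commute)
qed

lemma expectation_step_poly:
  assumes "distinct xs" "set_pmf p \<subseteq> set xs" "k < length xs"
    and step: "\<And>j. j < length xs \<Longrightarrow> poly P (xs ! j) = (if j \<le> k then 1 else 0)"
  shows "measure_pmf.expectation p (poly P) = prefix_mass p xs (Suc k)"
proof -
  have "measure_pmf.expectation p (poly P) = (\<Sum>u\<in>set xs. poly P u * pmf p u)"
    using assms(2) by (intro integral_measure_pmf_real) auto
  also have "\<dots> = (\<Sum>j<length xs. if j \<le> k then pmf p (xs ! j) else 0)"
    using \<open>distinct xs\<close> step by (auto simp: sum_set_conv_sum_nth intro!: sum.cong)
  also have "\<dots> = (\<Sum>j\<in>{j\<in>{..<length xs}. j \<le> k}. pmf p (xs ! j))"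
    by (rule sum.inter_filter[symmetric]) simp
  also have "{j\<in>{..<length xs}. j \<le> k} = {..<Suc k}"
    using \<open>k < length xs\<close> by auto
  finally show ?thesis
    unfolding prefix_mass_def .
qed

lemma mult_le_root_of_mult_power_le:
  fixes D g \<delta> :: real
  assumes "0 \<le> D" "D \<le> 1" "0 < g" "0 \<le> \<delta>" "D * g ^ Suc m \<le> 2 * 8 ^ m * \<delta>"
  shows "D * g \<le> 8 * \<delta> powr (1 / Suc m)"
proof (rule power_le_imp_le_base)
  have "(D * g) ^ Suc m = D ^ m * (D * g ^ Suc m)"
    by (simp add: power_mult_distrib)
  also have "\<dots> \<le> 1 * (D * g ^ Suc m)"
    using assms(1-3) by (intro mult_right_mono power_le_one) auto
  also have "\<dots> \<le> 2 * 8 ^ m * \<delta>"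
    using assms(5) by simp
  also have "\<dots> \<le> 8 ^ Suc m * \<delta>"
    using assms(4) by (intro mult_right_mono) simp_all
  also have "\<dots> = (8 * \<delta> powr (1 / Suc m)) ^ Suc m"
  proof -
    have "(\<delta> powr (1 / Suc m)) ^ Suc m = \<delta>"
      using assms(4) by (cases "\<delta> = 0") (simp, subst powr_power, simp_all)
    then show ?thesis
      by (simp only: power_mult_distrib)
  qed
  finally show "(D * g) ^ Suc m \<le> (8 * \<delta> powr (1 / Suc m)) ^ Suc m" .
qed simp

lemma prefix_mass_gap_bound:
  fixes xs :: "real list"
  assumes "sorted_wrt (<) xs" "set xs \<subseteq> {-1..1}" "length xs = Suc (Suc m)" "k \<le> m"
    and "set_pmf p \<subseteq> set xs" "set_pmf q \<subseteq> set xs"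
    and moments: "\<forall>i\<in>{1..Suc m}. \<bar>moment i p - moment i q\<bar> \<le> \<delta>"
  shows "\<bar>prefix_mass p xs (Suc k) - prefix_mass q xs (Suc k)\<bar> * (xs ! Suc k - xs ! k)
    \<le> 8 * \<delta> powr (1 / Suc m)"
proof -
  let ?D = "\<bar>prefix_mass p xs (Suc k) - prefix_mass q xs (Suc k)\<bar>" and ?g = "xs ! Suc k - xs ! k"
  have "distinct xs"
    using assms(1) by (simp add: strict_sorted_iff)
  have "strict_mono_on {..Suc m} (\<lambda>j. xs ! j)"
    using assms(1,3) by (intro strict_mono_onI) (simp add: sorted_wrt_iff_nth_less)
  moreover have "(\<lambda>j. xs ! j) ` {..Suc m} \<subseteq> {-1..1}"
    using assms(2,3) by (auto intro!: subsetD[OF assms(2)])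
  ultimately obtain P where "degree P \<le> Suc m"
    and step: "\<forall>j\<le>Suc m. poly P (xs ! j) = (if j \<le> k then 1 else 0)"
    and coeffs: "(\<Sum>i\<in>{1..Suc m}. \<bar>coeff P i\<bar>) * ?g ^ Suc m \<le> 2 * 8 ^ m"
    using exists_step_poly[OF _ _ \<open>k \<le> m\<close>] by blast
  have "measure_pmf.expectation p (poly P) = prefix_mass p xs (Suc k)"
    "measure_pmf.expectation q (poly P) = prefix_mass q xs (Suc k)"
    using \<open>distinct xs\<close> assms(3-6) step by (auto intro!: expectation_step_poly)
  moreover have "finite (set_pmf p)" "finite (set_pmf q)"
    using assms(5,6) by (auto intro: finite_subset)
  ultimately have "?D \<le> \<delta> * (\<Sum>i\<in>{1..Suc m}. \<bar>coeff P i\<bar>)"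
    using abs_expectation_poly_diff_le[OF _ _ \<open>degree P \<le> Suc m\<close> moments] by simp
  moreover have "0 \<le> \<delta>" "0 < ?g"
    using moments assms(1,3,4) by (auto simp: sorted_wrt_iff_nth_less)
  ultimately have "?D * ?g ^ Suc m \<le> \<delta> * ((\<Sum>i\<in>{1..Suc m}. \<bar>coeff P i\<bar>) * ?g ^ Suc m)"
    by (simp add: mult_right_mono mult.assoc)
  also have "\<dots> \<le> 2 * 8 ^ m * \<delta>"
    using mult_left_mono[OF coeffs \<open>0 \<le> \<delta>\<close>] by (simp add: mult.commute)
  finally have "?D * ?g ^ Suc m \<le> 2 * 8 ^ m * \<delta>" .
  moreover have "?D \<le> 1"
    using \<open>distinct xs\<close> assms(3-6) by (intro abs_diff_prefix_mass_le_1) auto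
  ultimately show ?thesis
    using \<open>0 \<le> \<delta>\<close> \<open>0 < ?g\<close> by (intro mult_le_root_of_mult_power_le) simp_all
qed

theorem proposition10:
  "\<exists>C>0. \<forall>(l::nat) (\<delta>::real) (\<nu>::real pmf) (\<nu>'::real pmf).
      2 \<le> l \<and>
      finite (set_pmf \<nu> \<union> set_pmf \<nu>') \<and>
      card (set_pmf \<nu> \<union> set_pmf \<nu>') = l \<and>
      set_pmf \<nu> \<union> set_pmf \<nu>' \<subseteq> {-1..1} \<and>
      (\<forall>i\<in>{1..l-1}. \<bar>moment i \<nu> - moment i \<nu>'\<bar> \<le> \<delta>)
      \<longrightarrow> W1 \<nu> \<nu>' \<le> C * real l * \<delta> powr (1 / (real l - 1))"
proof (intro exI[of _ 8] conjI allI impI)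
  fix l :: nat and \<delta> :: real and \<nu> \<nu>' :: "real pmf"
  assume H: "2 \<le> l \<and> finite (set_pmf \<nu> \<union> set_pmf \<nu>') \<and> card (set_pmf \<nu> \<union> set_pmf \<nu>') = l \<and>
      set_pmf \<nu> \<union> set_pmf \<nu>' \<subseteq> {-1..1} \<and> (\<forall>i\<in>{1..l-1}. \<bar>moment i \<nu> - moment i \<nu>'\<bar> \<le> \<delta>)"
  define xs where "xs = sorted_list_of_set (set_pmf \<nu> \<union> set_pmf \<nu>')"
  define m where "m = l - 2"
  have "2 \<le> l"
    using H by blast
  then have l: "l = Suc (Suc m)" "real l - 1 = Suc m"
    by (simp_all add: m_def)
  have xs: "sorted_wrt (<) xs" "set xs \<subseteq> {-1..1}" "length xs = Suc (Suc m)"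
    "set_pmf \<nu> \<subseteq> set xs" "set_pmf \<nu>' \<subseteq> set xs"
    using H l by (auto simp: xs_def strict_sorted_iff)
  have gap: "\<bar>prefix_mass \<nu> xs (Suc k) - prefix_mass \<nu>' xs (Suc k)\<bar> * (xs ! Suc k - xs ! k)
      \<le> 8 * \<delta> powr (1 / Suc m)" if "k < length xs - 1" for k
    using that H l xs by (intro prefix_mass_gap_bound) auto
  have "W1 \<nu> \<nu>' \<le> (\<Sum>k<length xs - 1. 8 * \<delta> powr (1 / Suc m))"
    using W1_le_sum_prefix_mass_gaps[OF xs(1,4,5)] gap by (meson order.trans sum_mono lessThan_iff)
  also have "\<dots> = real (Suc m) * (8 * \<delta> powr (1 / Suc m))"
    using xs(3) by simp
  also have "\<dots> \<le> real l * (8 * \<delta> powr (1 / Suc m))"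
    using l by (intro mult_right_mono) auto
  also have "\<dots> = 8 * real l * \<delta> powr (1 / (real l - 1))"
    using l by simp
  finally show "W1 \<nu> \<nu>' \<le> 8 * real l * \<delta> powr (1 / (real l - 1))" .
qed simp

end
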